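(* Let $\pi:E\to\mathbb{R}^k$ be a fiber bundle, $L:J^1\pi\to\mathbb{R}$ a Lagrangian and ${\bf\Gamma}=(\Gamma_1,\dots,\Gamma_k)$ a SOPDE on $J^1\pi$. Then the equation $\sum_\alpha\mathcal{L}_{\Gamma_\alpha}\Theta^\alpha_L=dL$ is equivalent to the equation $$\sum_{\alpha=1}^k i_{\Gamma_\alpha}\Omega^\alpha_L=(k-1)\,dL,$$ where $\Omega^\alpha_L=-d\Theta^\alpha_L$.
   Context: $E$ is $(n+k)$-dimensional with adapted coordinates $(x^\alpha,q^i)$, $x^\alpha$ standard coordinates on $\mathbb{R}^k$; $J^1\pi$ has coordinates $(x^\alpha,q^i,v^i_\alpha)$; summation over repeated indices. The Poincaré–Cartan $1$-forms are $\Theta^\alpha_L=L\,dx^\alpha+dL\circ S^\alpha$ with $S^\alpha=(dq^i-v^i_\beta dx^\beta)\otimes\partial/\partial v^i_\alpha$, i.e. locally $\Theta^\alpha_L=\frac{\partial L}{\partial v^i_\alpha}(dq^i-v^i_\beta dx^\beta)+L\,dx^\alpha$; $\Omega^\alpha_L=-d\Theta^\alpha_L$ are the Poincaré–Cartan $2$-forms. A SOPDE is a $k$-tuple of vector fields $\Gamma_\alpha$ on $J^1\pi$ with $dx^\alpha(\Gamma_\beta)=\delta^\alpha_\beta$ and $(dq^i-v^i_\gamma dx^\gamma)(\Gamma_\beta)=0$ for all $i,\alpha,\beta$. *)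

theory Defs
  imports "HOL-Analysis.Analysis"
begin

text \<open>Adapted coordinates on J^1 pi: x^alpha (alpha in 'k), q^i (i in 'n), v^i_alpha.\<close>

datatype ('k, 'n) coord = X 'k | Q 'n | V 'n 'k

instance coord :: (finite, finite) finite
proof
  have "(UNIV :: ('a, 'b) coord set) = range X \<union> range Q \<union> (case_prod V ` UNIV)"
  proof (intro set_eqI iffI)
    fix c :: "('a, 'b) coord"
    show "c \<in> range X \<union> range Q \<union> (case_prod V ` UNIV)"
      by (cases c) auto
  qed auto
  moreover have "finite (range (X :: 'a \<Rightarrow> ('a, 'b) coord))" by simp
  moreover have "finite (range (Q :: 'b \<Rightarrow> ('a, 'b) coord))" by simp
  moreover have "finite ((case_prod V :: 'b \<times> 'a \<Rightarrow> ('a, 'b) coord) ` UNIV)" by simp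
  ultimately show "finite (UNIV :: ('a, 'b) coord set)" by (metis finite_Un)
qed

type_synonym ('k, 'n) pt = "real ^ ('k, 'n) coord"

definition vc :: "('k::finite, 'n::finite) pt \<Rightarrow> 'n \<Rightarrow> 'k \<Rightarrow> real" where
  "vc p i \<alpha> = p $ V i \<alpha>"

definition pd :: "('k::finite, 'n::finite) coord \<Rightarrow> (('k, 'n) pt \<Rightarrow> real) \<Rightarrow> ('k, 'n) pt \<Rightarrow> real" where
  "pd c f p = frechet_derivative f (at p) (axis c 1)"

fun pds :: "('k::finite, 'n::finite) coord list \<Rightarrow> (('k, 'n) pt \<Rightarrow> real) \<Rightarrow> ('k, 'n) pt \<Rightarrow> real" where
  "pds [] f = f"
| "pds (c # cs) f = pd c (pds cs f)"

definition smooth_on :: "('k::finite, 'n::finite) pt set \<Rightarrow> (('k, 'n) pt \<Rightarrow> real) \<Rightarrow> bool" where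
  "smooth_on U f \<longleftrightarrow> (\<forall>cs. pds cs f differentiable_on U)"

text \<open>1-forms: coefficient functions w.r.t. the coordinate coframe;
  2-forms: coefficients omega_ab = omega(d/dc_a, d/dc_b); vector fields: vector-valued.\<close>
type_synonym ('k, 'n) form1 = "('k, 'n) pt \<Rightarrow> ('k, 'n) coord \<Rightarrow> real"
type_synonym ('k, 'n) form2 = "('k, 'n) pt \<Rightarrow> ('k, 'n) coord \<Rightarrow> ('k, 'n) coord \<Rightarrow> real"
type_synonym ('k, 'n) vfield = "('k, 'n) pt \<Rightarrow> ('k, 'n) pt"

definition ev :: "(('k::finite, 'n::finite) coord \<Rightarrow> real) \<Rightarrow> ('k, 'n) pt \<Rightarrow> real" where
  "ev w Y = (\<Sum>c\<in>UNIV. w c * Y $ c)"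

definition dF :: "(('k::finite, 'n::finite) pt \<Rightarrow> real) \<Rightarrow> ('k, 'n) form1" where
  "dF f p c = pd c f p"

definition d1 :: "('k::finite, 'n::finite) form1 \<Rightarrow> ('k, 'n) form2" where
  "d1 \<theta> p a b = pd a (\<lambda>q. \<theta> q b) p - pd b (\<lambda>q. \<theta> q a) p"

definition iv :: "('k::finite, 'n::finite) vfield \<Rightarrow> ('k, 'n) form2 \<Rightarrow> ('k, 'n) form1" where
  "iv Xf \<omega> p b = (\<Sum>a\<in>UNIV. Xf p $ a * \<omega> p a b)"

definition lie :: "('k::finite, 'n::finite) vfield \<Rightarrow> ('k, 'n) form1 \<Rightarrow> ('k, 'n) form1" where
  "lie Xf \<theta> p b = (\<Sum>a\<in>UNIV. Xf p $ a * pd a (\<lambda>q. \<theta> q b) p)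
                 + (\<Sum>a\<in>UNIV. \<theta> p a * pd b (\<lambda>q. Xf q $ a) p)"

text \<open>The canonical (1,1)-tensor fields S^alpha = (dq^i - v^i_beta dx^beta) \<otimes> d/dv^i_alpha.\<close>
definition Sten :: "'k \<Rightarrow> ('k::finite, 'n::finite) pt \<Rightarrow> ('k, 'n) pt \<Rightarrow> ('k, 'n) pt" where
  "Sten \<alpha> p Y = (\<chi> c. case c of
       V i \<beta> \<Rightarrow> (if \<beta> = \<alpha> then Y $ Q i - (\<Sum>\<gamma>\<in>UNIV. vc p i \<gamma> * Y $ X \<gamma>) else 0)
     | _ \<Rightarrow> 0)"

definition Theta :: "(('k::finite, 'n::finite) pt \<Rightarrow> real) \<Rightarrow> 'k \<Rightarrow> ('k, 'n) form1" where
  "Theta L \<alpha> p c = L p * (if c = X \<alpha> then 1 else 0) + ev (dF L p) (Sten \<alpha> p (axis c 1))"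

definition Omega :: "(('k::finite, 'n::finite) pt \<Rightarrow> real) \<Rightarrow> 'k \<Rightarrow> ('k, 'n) form2" where
  "Omega L \<alpha> p a b = - d1 (Theta L \<alpha>) p a b"

definition is_SOPDE :: "('k::finite, 'n::finite) pt set \<Rightarrow> ('k \<Rightarrow> ('k, 'n) vfield) \<Rightarrow> bool" where
  "is_SOPDE U \<Gamma> \<longleftrightarrow> (\<forall>p\<in>U. \<forall>\<alpha> \<beta>.
      \<Gamma> \<beta> p $ X \<alpha> = (if \<alpha> = \<beta> then 1 else 0) \<and>
      (\<forall>i. \<Gamma> \<beta> p $ Q i - (\<Sum>\<gamma>\<in>UNIV. vc p i \<gamma> * \<Gamma> \<beta> p $ X \<gamma>) = 0))"

end

theory Submission
  imports Defs
begin

text \<open>Cartan's formula \<open>lie Y \<theta> = i\<^sub>Y d\<theta> + d(\<theta>(Y))\<close>, applied to each \<open>\<Theta>\<^sup>\<alpha>\<close> along \<open>\<Gamma>\<^sub>\<alpha>\<close>,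
  gives \<open>\<Sum>\<^sub>\<alpha> lie \<Gamma>\<^sub>\<alpha> \<Theta>\<^sup>\<alpha> = - \<Sum>\<^sub>\<alpha> i\<^sub>\<Gamma>\<^sub>\<alpha> \<Omega>\<^sup>\<alpha> + d(\<Sum>\<^sub>\<alpha> \<Theta>\<^sup>\<alpha>(\<Gamma>\<^sub>\<alpha>))\<close>. The SOPDE conditions say
  exactly that \<open>dx\<^sup>\<alpha>(\<Gamma>\<^sub>\<alpha>) = 1\<close> and \<open>S\<^sup>\<alpha>(\<Gamma>\<^sub>\<alpha>) = 0\<close>, so \<open>\<Theta>\<^sup>\<alpha>(\<Gamma>\<^sub>\<alpha>) = L\<close> and the last term
  is \<open>k dL\<close>; the two equations are then the same linear relation between
  \<open>\<Sum>\<^sub>\<alpha> i\<^sub>\<Gamma>\<^sub>\<alpha> \<Omega>\<^sup>\<alpha>\<close> and \<open>dL\<close>.\<close>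

lemma pd_eq_has_derivative:
  assumes "(f has_derivative D) (at p)"
  shows "pd c f p = D (axis c 1)"
  unfolding pd_def frechet_derivative_at[OF assms, symmetric] ..

lemma pd_mult:
  assumes "f differentiable (at p)" "g differentiable (at p)"
  shows "pd c (\<lambda>q. f q * g q) p = f p * pd c g p + pd c f p * g p"
  unfolding pd_def
  by (intro pd_eq_has_derivative[unfolded pd_def] has_derivative_mult
        assms[unfolded frechet_derivative_works])

lemma pd_cmult:
  assumes "f differentiable (at p)"
  shows "pd c (\<lambda>q. r * f q) p = r * pd c f p"
  unfolding pd_def
  by (intro pd_eq_has_derivative[unfolded pd_def] has_derivative_mult_right
        assms[unfolded frechet_derivative_works])

lemma pd_sum:
  assumes "finite S" "\<And>s. s \<in> S \<Longrightarrow> f s differentiable (at p)"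
  shows "pd c (\<lambda>q. \<Sum>s\<in>S. f s q) p = (\<Sum>s\<in>S. pd c (f s) p)"
  unfolding pd_def
  by (intro pd_eq_has_derivative[unfolded pd_def] has_derivative_sum assms(1)
        assms(2)[unfolded frechet_derivative_works])

lemma lie_eq_iv_d1_plus_pd_ev:
  assumes "\<And>c. (\<lambda>q. \<theta> q c) differentiable (at p)"
    and "\<And>c. (\<lambda>q. Y q $ c) differentiable (at p)"
  shows "lie Y \<theta> p b = iv Y (d1 \<theta>) p b + pd b (\<lambda>q. ev (\<theta> q) (Y q)) p"
proof -
  have "pd b (\<lambda>q. ev (\<theta> q) (Y q)) p = (\<Sum>a\<in>UNIV. pd b (\<lambda>q. \<theta> q a * Y q $ a) p)"
    unfolding ev_def by (rule pd_sum) (auto intro!: differentiable_mult assms)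
  also have "\<dots> = (\<Sum>a\<in>UNIV. \<theta> p a * pd b (\<lambda>q. Y q $ a) p + Y p $ a * pd b (\<lambda>q. \<theta> q a) p)"
    by (intro sum.cong refl) (simp add: pd_mult assms)
  finally have "pd b (\<lambda>q. ev (\<theta> q) (Y q)) p
      = (\<Sum>a\<in>UNIV. \<theta> p a * pd b (\<lambda>q. Y q $ a) p) + (\<Sum>a\<in>UNIV. Y p $ a * pd b (\<lambda>q. \<theta> q a) p)"
    by (simp only: sum.distrib)
  moreover have "iv Y (d1 \<theta>) p b
      = (\<Sum>a\<in>UNIV. Y p $ a * pd a (\<lambda>q. \<theta> q b) p) - (\<Sum>a\<in>UNIV. Y p $ a * pd b (\<lambda>q. \<theta> q a) p)"
    unfolding iv_def d1_def by (simp only: right_diff_distrib sum_subtractf)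
  ultimately show ?thesis
    unfolding lie_def by simp
qed

lemma linear_Sten: "linear (Sten \<alpha> p)"
proof (rule linearI)
  show "Sten \<alpha> p (x + y) = Sten \<alpha> p x + Sten \<alpha> p y" for x y
    unfolding vec_eq_iff
  proof
    fix c show "Sten \<alpha> p (x + y) $ c = (Sten \<alpha> p x + Sten \<alpha> p y) $ c"
      by (cases c) (simp_all add: Sten_def distrib_left sum.distrib)
  qed
  show "Sten \<alpha> p (r *\<^sub>R x) = r *\<^sub>R Sten \<alpha> p x" for r x
    unfolding vec_eq_iff
  proof
    fix c show "Sten \<alpha> p (r *\<^sub>R x) $ c = (r *\<^sub>R Sten \<alpha> p x) $ c"
      by (cases c) (simp_all add: Sten_def right_diff_distrib sum_distrib_left mult.left_commute)
  qed
qed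

lemma linear_vec_nth_expansion:
  fixes f :: "real ^ 'a \<Rightarrow> real ^ 'b"
  assumes "linear f"
  shows "f x $ j = (\<Sum>i\<in>UNIV. x $ i * f (axis i 1) $ j)"
  by (rule linear_componentwise) (use assms in \<open>simp add: scalar_mult_eq_scaleR linear_def\<close>)

lemma ev_Theta:
  "ev (Theta L \<alpha> q) Y = L q * Y $ X \<alpha> + ev (dF L q) (Sten \<alpha> q Y)"
proof -
  have "(\<Sum>c\<in>UNIV. ev (dF L q) (Sten \<alpha> q (axis c 1)) * Y $ c)
      = (\<Sum>c'\<in>UNIV. dF L q c' * (\<Sum>c\<in>UNIV. Y $ c * Sten \<alpha> q (axis c 1) $ c'))"
    unfolding ev_def sum_distrib_right sum_distrib_left
    by (subst sum.swap) (simp only: ac_simps)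
  also have "\<dots> = ev (dF L q) (Sten \<alpha> q Y)"
    unfolding ev_def by (simp only: linear_vec_nth_expansion[OF linear_Sten, where x=Y])
  moreover have "(\<Sum>c\<in>UNIV. L q * (if c = X \<alpha> then 1 else 0) * Y $ c) = L q * Y $ X \<alpha>"
    by (simp add: mult.assoc if_distrib[of "\<lambda>x. x * _"] if_distrib[of "\<lambda>x. _ * x"] cong: if_cong)
  ultimately show ?thesis
    unfolding Theta_def ev_def[of "Theta L \<alpha> q"] distrib_right sum.distrib
    by simp
qed

lemma Sten_SOPDE_eq_0:
  assumes "is_SOPDE U \<Gamma>" "q \<in> U"
  shows "Sten \<alpha> q (\<Gamma> \<alpha> q) = 0"
  using assms unfolding is_SOPDE_def Sten_def vec_eq_iff by (auto split: coord.split)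

lemma ev_Theta_SOPDE:
  assumes "is_SOPDE U \<Gamma>" "q \<in> U"
  shows "ev (Theta L \<alpha> q) (\<Gamma> \<alpha> q) = L q"
proof -
  have "\<Gamma> \<alpha> q $ X \<alpha> = 1"
    using assms unfolding is_SOPDE_def by simp
  then show ?thesis
    unfolding ev_Theta Sten_SOPDE_eq_0[OF assms] by (simp add: ev_def)
qed

lemma differentiable_Sten_component:
  fixes p :: "('k::finite, 'n::finite) pt"
  shows "(\<lambda>q. Sten \<alpha> q Y $ c) differentiable (at p)"
proof (cases c)
  case (V i \<beta>)
  have "(\<lambda>q. q $ j) differentiable (at p)" for j
    by (simp add: bounded_linear_imp_differentiable bounded_linear_vec_nth)
  then have "(\<lambda>q. Y $ Q i - (\<Sum>\<gamma>\<in>UNIV. vc q i \<gamma> * Y $ X \<gamma>)) differentiable (at p)"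
    unfolding vc_def by (intro differentiable_diff differentiable_sum differentiable_mult) auto
  then show ?thesis
    using V by (cases "\<beta> = \<alpha>") (simp_all add: Sten_def)
qed (simp_all add: Sten_def)

lemma differentiable_Theta_component:
  assumes "L differentiable (at p)" "\<And>c. pd c L differentiable (at p)"
  shows "(\<lambda>q. Theta L \<alpha> q c) differentiable (at p)"
  unfolding Theta_def ev_def dF_def
  by (intro differentiable_add differentiable_mult differentiable_sum
      differentiable_Sten_component differentiable_const assms)
    (auto intro!: differentiable_mult differentiable_Sten_component assms)

lemma smooth_on_imp_differentiable:
  assumes "smooth_on U f" "open U" "p \<in> U"
  shows "pds cs f differentiable (at p)"
  using assms unfolding smooth_on_def by (meson differentiable_on_eq_differentiable_at)

lemma iv_Omega: "iv Y (Omega L \<alpha>) p b = - iv Y (d1 (Theta L \<alpha>)) p b"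
  unfolding iv_def Omega_def by (simp add: sum_negf)

lemma sum_lie_Theta_SOPDE:
  fixes \<Gamma> :: "'k \<Rightarrow> ('k::finite, 'n::finite) vfield"
  assumes "open U" "p \<in> U" "is_SOPDE U \<Gamma>"
    and "L differentiable (at p)" "\<And>c. pd c L differentiable (at p)"
    and "\<And>\<alpha> c. (\<lambda>q. \<Gamma> \<alpha> q $ c) differentiable (at p)"
  shows "(\<Sum>\<alpha>\<in>UNIV. lie (\<Gamma> \<alpha>) (Theta L \<alpha>) p b)
       = - (\<Sum>\<alpha>\<in>UNIV. iv (\<Gamma> \<alpha>) (Omega L \<alpha>) p b) + real CARD('k) * dF L p b"
proof -
  have dTheta: "(\<lambda>q. Theta L \<alpha> q c) differentiable (at p)" for \<alpha> c
    using differentiable_Theta_component assms(4,5) .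
  have dev: "(\<lambda>q. ev (Theta L \<alpha> q) (\<Gamma> \<alpha> q)) differentiable (at p)" for \<alpha>
    unfolding ev_def by (auto intro!: differentiable_sum differentiable_mult dTheta assms(6))
  have "(\<Sum>\<alpha>\<in>UNIV. pd b (\<lambda>q. ev (Theta L \<alpha> q) (\<Gamma> \<alpha> q)) p)
      = pd b (\<lambda>q. \<Sum>\<alpha>\<in>UNIV. ev (Theta L \<alpha> q) (\<Gamma> \<alpha> q)) p"
    by (rule pd_sum[symmetric]) (simp_all add: dev)
  also have "\<dots> = pd b (\<lambda>q. real CARD('k) * L q) p"
    unfolding pd_def
    by (subst frechet_derivative_transform_within_open[OF _ assms(1,2)])
      (auto intro: differentiable_sum dev simp: ev_Theta_SOPDE[OF assms(3)])
  also have "\<dots> = real CARD('k) * dF L p b"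
    unfolding dF_def using pd_cmult assms(4) .
  finally show ?thesis
    by (simp add: lie_eq_iv_d1_plus_pd_ev dTheta assms(6) iv_Omega sum.distrib sum_negf)
qed

theorem mainTheorem4:
  fixes U :: "('k::finite, 'n::finite) pt set"
    and L :: "('k, 'n) pt \<Rightarrow> real"
    and \<Gamma> :: "'k \<Rightarrow> ('k, 'n) vfield"
  assumes "open U"
    and "smooth_on U L"
    and "\<forall>\<alpha> a. smooth_on U (\<lambda>p. \<Gamma> \<alpha> p $ a)"
    and "is_SOPDE U \<Gamma>"
  shows "(\<forall>p\<in>U. \<forall>b. (\<Sum>\<alpha>\<in>UNIV. lie (\<Gamma> \<alpha>) (Theta L \<alpha>) p b) = dF L p b)
     \<longleftrightarrow> (\<forall>p\<in>U. \<forall>b. (\<Sum>\<alpha>\<in>UNIV. iv (\<Gamma> \<alpha>) (Omega L \<alpha>) p b)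
                        = (real CARD('k) - 1) * dF L p b)"
proof -
  have sum_lie: "(\<Sum>\<alpha>\<in>UNIV. lie (\<Gamma> \<alpha>) (Theta L \<alpha>) p b)
      = - (\<Sum>\<alpha>\<in>UNIV. iv (\<Gamma> \<alpha>) (Omega L \<alpha>) p b) + real CARD('k) * dF L p b"
    if "p \<in> U" for p b
  proof (rule sum_lie_Theta_SOPDE[OF assms(1) that assms(4)])
    show "L differentiable (at p)"
      using smooth_on_imp_differentiable[OF assms(2,1) that, of "[]"] by simp
    show "pd c L differentiable (at p)" for c
      using smooth_on_imp_differentiable[OF assms(2,1) that, of "[c]"] by simp
    show "(\<lambda>q. \<Gamma> \<alpha> q $ c) differentiable (at p)" for \<alpha> c
      using smooth_on_imp_differentiable[OF assms(3)[rule_format] assms(1) that, of "[]"] by simp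
  qed
  have "(\<Sum>\<alpha>\<in>UNIV. lie (\<Gamma> \<alpha>) (Theta L \<alpha>) p b) = dF L p b
      \<longleftrightarrow> (\<Sum>\<alpha>\<in>UNIV. iv (\<Gamma> \<alpha>) (Omega L \<alpha>) p b) = (real CARD('k) - 1) * dF L p b"
    if "p \<in> U" for p b
    unfolding sum_lie[OF that] by (auto simp: algebra_simps)
  then show ?thesis
    by auto
qed

end
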